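(* Let $C>0$ and for each $A>1$ let $\mathcal{E}_A=\{(X,M): X=(\mathbf f,\mathbf g,\mathbf F,\mathbf G,\mathbf u,\mathbf v)\in\mathbb{R}^6,\ \mathbf u,\mathbf v>0,\ 1\le\mathbf u\mathbf v\le A,\ \mathbf f^2\le\mathbf F\mathbf v,\ \mathbf g^2\le\mathbf G\mathbf u,\ 0\le M\le1\}$ and let $\mathcal{B}_A:\mathcal{E}_A\to\mathbb{R}$ be functions such that (i) $0\le\mathcal{B}_A(X,M)\le CA\mathbf F^{1/2}\mathbf G^{1/2}$ on $\mathcal{E}_A$, and (ii) for all $(X,M),(X_1,M_1),(X_2,M_2)\in\mathcal{E}_A$ with $X=(X_1+X_2)/2$ and $\mathbf d:=M-(M_1+M_2)/2\ge0$, \[ \mathcal{B}_A(X,M)-\tfrac12\left(\mathcal{B}_A(X_1,M_1)+\mathcal{B}_A(X_2,M_2)\right)\ge\mathbf d\,|\mathbf f|\,|\mathbf g_1-\mathbf g_2|, \] where $\mathbf f$ is the first coordinate of $X$ and $\mathbf g_i$ the second coordinate of $X_i$. Fix $A>1$, $n\ge1$ and a dyadic interval $I_0\subset\mathbb{R}$, and suppose that for every $I\in\operatorname{chld}_k(I_0)$, $0\le k\le n$, points $(X_I,M_I)\in\mathcal{E}_A$, $X_I=(\mathbf f_I,\mathbf g_I,\mathbf F_I,\mathbf G_I,\mathbf u_I,\mathbf v_I)$, are given such that $X_I=(X_{I_1}+X_{I_2})/2$ for every $I\in\operatorname{chld}_k(I_0)$, $0\le k<n$, with children $I_1,I_2$;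 $M_I=(M_{I_1}+M_{I_2})/2$ for every such $I\neq I_0$; and $\mathbf d_{I_0}:=M_{I_0}-2^{-n}\sum_{I\in\operatorname{chld}_n(I_0)}M_I\ge0$. Then, with $A'=4.5A$, \[ \mathbf d_{I_0}\,|\mathbf f_{I_0}|\Bigl(2^{-n}\!\!\sum_{I\in\operatorname{chld}_n(I_0)}|\mathbf g_I-\mathbf g_{I_0}|\Bigr)\le 36\Bigl(\mathcal{B}_{A'}(X_{I_0},M_{I_0})-2^{-n}\!\!\sum_{I\in\operatorname{chld}_n(I_0)}\mathcal{B}_{A'}(X_I,M_I)\Bigr). \]
   Context: For a dyadic interval $I$, $\operatorname{chld}_0(I)=\{I\}$ and $\operatorname{chld}_k(I)$ is the set of the $2^k$ dyadic subintervals of $I$ of length $2^{-k}|I|$. Note $\mathcal{E}_A\subset\mathcal{E}_{A'}$ for $A\le A'$. *)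

theory Defs
  imports "HOL-Analysis.Analysis"
begin

type_synonym pt = "real \<times> real \<times> real \<times> real \<times> real \<times> real"

definition cf :: "pt \<Rightarrow> real" where "cf X = fst X"
definition cg :: "pt \<Rightarrow> real" where "cg X = fst (snd X)"
definition cF :: "pt \<Rightarrow> real" where "cF X = fst (snd (snd X))"
definition cG :: "pt \<Rightarrow> real" where "cG X = fst (snd (snd (snd X)))"
definition cu :: "pt \<Rightarrow> real" where "cu X = fst (snd (snd (snd (snd X))))"
definition cv :: "pt \<Rightarrow> real" where "cv X = snd (snd (snd (snd (snd X))))"

definition inE :: "real \<Rightarrow> pt \<Rightarrow> real \<Rightarrow> bool" where
  "inE A X M \<longleftrightarrow> cu X > 0 \<and> cv X > 0 \<and> 1 \<le> cu X * cv X \<and> cu X * cv X \<le> A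
     \<and> (cf X)\<^sup>2 \<le> cF X * cv X \<and> (cg X)\<^sup>2 \<le> cG X * cu X \<and> 0 \<le> M \<and> M \<le> 1"

end

theory Submission
  imports Defs
begin

(* Reweight the leaves by 1 + w and by 1 - w, where w = sgn(g_I - g_{I_0})/6,
   recentred to mean zero.  The two reweighted averages (P+, K+) and (P-, K-) have the
   root data (X_{I_0}, mean of the leaf M's) as midpoint and are separated in g by a
   third of the mean oscillation.  A weighted Jensen inequality on the dyadic tree
   (from midpoint concavity of B) bounds the mean of B over the leaves by the mean of
   B(P+, K+) and B(P-, K-), and the gain inequality (ii) at the root finishes. *)

lemma linear_coords: "linear cf" "linear cg" "linear cF" "linear cG" "linear cu" "linear cv"
  by (auto intro!: linearI simp: cf_def cg_def cF_def cG_def cu_def cv_def)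

lemmas coord_add = linear_coords[THEN linear_add]
lemmas coord_scale = linear_coords[THEN linear_scale]

(* It is convex, whereas the bound
   uv <= A is not preserved by convex combinations; controlling that bound is the
   reason for the loss from A to 9A/2. *)
definition Dom :: "pt set" where
  "Dom = {X. 0 < cu X \<and> 0 < cv X \<and> 1 \<le> cu X * cv X
             \<and> (cf X)\<^sup>2 \<le> cF X * cv X \<and> (cg X)\<^sup>2 \<le> cG X * cu X}"

lemma inE_iff: "inE a X K \<longleftrightarrow> X \<in> Dom \<and> cu X * cv X \<le> a \<and> 0 \<le> K \<and> K \<le> 1"
  unfolding inE_def Dom_def by auto

lemma inE_mono: "a \<le> a' \<Longrightarrow> inE a X K \<Longrightarrow> inE a' X K"
  unfolding inE_def by linarith

lemma one_le_mult_convex: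
  fixes u1 u2 v1 v2 s t :: real
  assumes "1 \<le> u1 * v1" "1 \<le> u2 * v2" "0 < u1" "0 < u2" "0 < v1" "0 < v2"
    and "0 \<le> s" "0 \<le> t" "s + t = 1"
  shows "1 \<le> (s * u1 + t * u2) * (s * v1 + t * v2)"
proof -
  have "1 * 1 \<le> (u1 * v1) * (u2 * v2)"
    by (rule mult_mono) (use assms in auto)
  then have "1 \<le> (u1 * v2) * (u2 * v1)"
    by (simp add: algebra_simps)
  moreover have "(u1 * v2 + u2 * v1)\<^sup>2 = (u1 * v2 - u2 * v1)\<^sup>2 + 4 * ((u1 * v2) * (u2 * v1))"
    by (simp add: algebra_simps power2_eq_square)
  ultimately have "4 \<le> (u1 * v2 + u2 * v1)\<^sup>2"
    using zero_le_power2[of "u1 * v2 - u2 * v1"] by linarith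
  then have cross: "2 \<le> u1 * v2 + u2 * v1"
    using power2_le_imp_le[of 2 "u1 * v2 + u2 * v1"] assms(3-6) by simp
  have "(s * u1 + t * u2) * (s * v1 + t * v2) = s\<^sup>2 * (u1 * v1) + t\<^sup>2 * (u2 * v2) + s * t * (u1 * v2 + u2 * v1)"
    by (simp add: algebra_simps power2_eq_square)
  also have "\<dots> \<ge> s\<^sup>2 * 1 + t\<^sup>2 * 1 + s * t * 2"
    using assms cross by (intro add_mono mult_left_mono) auto
  also have "s\<^sup>2 * 1 + t\<^sup>2 * 1 + s * t * 2 = (s + t)\<^sup>2"
    by (simp add: algebra_simps power2_eq_square)
  finally show ?thesis
    using assms(9) by simp
qed

lemma square_le_mult_convex:
  fixes f1 f2 F1 F2 q1 q2 s t :: real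
  assumes "f1\<^sup>2 \<le> F1 * q1" "f2\<^sup>2 \<le> F2 * q2" "0 < q1" "0 < q2" "0 \<le> s" "0 \<le> t"
  shows "(s * f1 + t * f2)\<^sup>2 \<le> (s * F1 + t * F2) * (s * q1 + t * q2)"
proof -
  have "(F1 * q2 + F2 * q1) * (q1 * q2) = (F1 * q1) * q2\<^sup>2 + (F2 * q2) * q1\<^sup>2"
    by (simp add: algebra_simps power2_eq_square)
  also have "\<dots> \<ge> f1\<^sup>2 * q2\<^sup>2 + f2\<^sup>2 * q1\<^sup>2"
    using assms(1,2) by (intro add_mono mult_right_mono) auto
  also have "f1\<^sup>2 * q2\<^sup>2 + f2\<^sup>2 * q1\<^sup>2 = (f1 * q2 - f2 * q1)\<^sup>2 + (2 * f1 * f2) * (q1 * q2)"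
    by (simp add: algebra_simps power2_eq_square)
  finally have "(2 * f1 * f2) * (q1 * q2) \<le> (F1 * q2 + F2 * q1) * (q1 * q2)"
    using zero_le_power2[of "f1 * q2 - f2 * q1"] by linarith
  then have cross: "2 * f1 * f2 \<le> F1 * q2 + F2 * q1"
    using assms(3,4) by (simp add: mult_le_cancel_right)
  have "(s * f1 + t * f2)\<^sup>2 = s\<^sup>2 * f1\<^sup>2 + t\<^sup>2 * f2\<^sup>2 + s * t * (2 * f1 * f2)"
    by (simp add: algebra_simps power2_eq_square)
  also have "\<dots> \<le> s\<^sup>2 * (F1 * q1) + t\<^sup>2 * (F2 * q2) + s * t * (F1 * q2 + F2 * q1)"
    using assms cross by (intro add_mono mult_left_mono) auto
  also have "\<dots> = (s * F1 + t * F2) * (s * q1 + t * q2)"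
    by (simp add: algebra_simps power2_eq_square)
  finally show ?thesis .
qed

lemma convex_Dom: "convex Dom"
proof (rule convexI)
  fix x y :: pt and s t :: real
  assume "x \<in> Dom" "y \<in> Dom" and st: "0 \<le> s" "0 \<le> t" "s + t = 1"
  then have x: "0 < cu x" "0 < cv x" "1 \<le> cu x * cv x" "(cf x)\<^sup>2 \<le> cF x * cv x" "(cg x)\<^sup>2 \<le> cG x * cu x"
    and y: "0 < cu y" "0 < cv y" "1 \<le> cu y * cv y" "(cf y)\<^sup>2 \<le> cF y * cv y" "(cg y)\<^sup>2 \<le> cG y * cu y"
    unfolding Dom_def by auto
  have pos: "0 < s * a + t * b" if "0 < a" "0 < b" for a b :: real
    using st that by (cases "s = 0") (auto intro: add_pos_nonneg)
  show "s *\<^sub>R x + t *\<^sub>R y \<in> Dom"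
    unfolding Dom_def
    using pos[OF x(1) y(1)] pos[OF x(2) y(2)]
      one_le_mult_convex[OF x(3) y(3) x(1) y(1) x(2) y(2) st]
      square_le_mult_convex[OF x(4) y(4) x(2) y(2) st(1,2)]
      square_le_mult_convex[OF x(5) y(5) x(1) y(1) st(1,2)]
    by (simp add: coord_add coord_scale)
qed

(* Along a segment the product of two affine functions exceeds its values at the two
   end points and at the midpoint by at most the factor 9/8 (Lagrange interpolation
   of the quadratic through t = 0, 1/2, 1). *)
lemma segment_product_bound:
  fixes a1 a2 b1 b2 c t :: real
  assumes "0 \<le> a1" "0 \<le> a2" "0 \<le> b1" "0 \<le> b2"
    and "a1 * b1 \<le> c" "a2 * b2 \<le> c" "(a1 + a2) * (b1 + b2) \<le> 4 * c"
    and "0 \<le> t" "t \<le> 1"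
  shows "(t * a1 + (1 - t) * a2) * (t * b1 + (1 - t) * b2) \<le> 9/8 * c"
proof -
  define L0 L1 L2 where "L0 = (2*t - 1) * (t - 1)" and "L1 = 4*t * (1 - t)" and "L2 = t * (2*t - 1)"
  have interp: "(t * a1 + (1 - t) * a2) * (t * b1 + (1 - t) * b2)
      = a2 * b2 * L0 + ((a1 + a2) * (b1 + b2) / 4) * L1 + a1 * b1 * L2"
    unfolding L0_def L1_def L2_def by (simp add: field_simps)
  have weighted: "p * L \<le> c * max L 0" if "0 \<le> p" "p \<le> c" for p L :: real
    using that by (cases "L \<ge> 0") (auto intro: mult_right_mono mult_nonneg_nonpos)
  have "L1 \<ge> 0"
    unfolding L1_def using assms(8,9) by simp
  then have "((a1 + a2) * (b1 + b2) / 4) * L1 \<le> c * L1"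
    using assms(7) by (intro mult_right_mono) auto
  then have "(t * a1 + (1 - t) * a2) * (t * b1 + (1 - t) * b2) \<le> c * max L0 0 + c * L1 + c * max L2 0"
    unfolding interp using weighted[of "a2 * b2" L0] weighted[of "a1 * b1" L2] assms(1-6) by simp
  also have "\<dots> = c * (max L0 0 + L1 + max L2 0)"
    by (simp add: algebra_simps)
  also have "max L0 0 + L1 + max L2 0 \<le> 9/8"
  proof (cases "t \<le> 1/2")
    case True
    then have "L0 \<ge> 0" "L2 \<le> 0"
      unfolding L0_def L2_def using assms(8) by (auto intro: mult_nonpos_nonpos mult_nonneg_nonpos)
    moreover have "L0 + L1 = 9/8 - 2 * (t - 1/4)\<^sup>2"
      unfolding L0_def L1_def by (simp add: algebra_simps power2_eq_square)
    ultimately show ?thesis by simp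
  next
    case False
    then have "L0 \<le> 0" "L2 \<ge> 0"
      unfolding L0_def L2_def using assms(9) by (auto intro: mult_nonneg_nonpos)
    moreover have "L1 + L2 = 9/8 - 2 * (t - 3/4)\<^sup>2"
      unfolding L1_def L2_def by (simp add: algebra_simps power2_eq_square)
    ultimately show ?thesis by simp
  qed
  then have "c * (max L0 0 + L1 + max L2 0) \<le> c * (9/8)"
    using assms(1,3,5) by (intro mult_left_mono) (auto intro: order_trans[OF mult_nonneg_nonneg])
  finally show ?thesis by simp
qed

lemma segment_inE:
  assumes "P1 \<in> Dom" "P2 \<in> Dom" "0 \<le> K1" "K1 \<le> 1" "0 \<le> K2" "K2 \<le> 1"
    and "cu P1 * cv P1 \<le> c" "cu P2 * cv P2 \<le> c"
    and "(cu P1 + cu P2) * (cv P1 + cv P2) \<le> 4 * c"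
    and "0 \<le> x" "x \<le> 1"
  shows "inE (9/8 * c) (x *\<^sub>R P1 + (1 - x) *\<^sub>R P2) (x * K1 + (1 - x) * K2)"
proof -
  have "x *\<^sub>R P1 + (1 - x) *\<^sub>R P2 \<in> Dom"
    using convexD[OF convex_Dom assms(1,2)] assms(10,11) by simp
  moreover have "(x * cu P1 + (1 - x) * cu P2) * (x * cv P1 + (1 - x) * cv P2) \<le> 9/8 * c"
    using assms(1,2) by (intro segment_product_bound assms(7-11)) (auto simp: Dom_def)
  moreover have "0 \<le> x * K1" "x * K1 \<le> x" "0 \<le> (1 - x) * K2" "(1 - x) * K2 \<le> 1 - x"
    using assms(3-6,10,11) by (simp_all add: mult_left_le)
  ultimately show ?thesis
    unfolding inE_iff by (simp add: coord_add coord_scale)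
qed

(* A midpoint-concave function on [0,1] that vanishes at both ends and is bounded
   below is nonnegative: a negative value would double under reflection towards an
   end point and eventually pass the lower bound. *)
lemma midpoint_concave_nonneg:
  fixes \<psi> :: "real \<Rightarrow> real"
  assumes mid: "\<And>x y. x \<in> {0..1} \<Longrightarrow> y \<in> {0..1} \<Longrightarrow> (\<psi> x + \<psi> y) / 2 \<le> \<psi> ((x + y) / 2)"
    and ends: "\<psi> 0 = 0" "\<psi> 1 = 0"
    and below: "\<And>x. x \<in> {0..1} \<Longrightarrow> L \<le> \<psi> x"
    and t: "t \<in> {0..1}"
  shows "0 \<le> \<psi> t"
proof (rule ccontr)
  assume "\<not> 0 \<le> \<psi> t"
  then have neg: "\<psi> t < 0" by simp
  have double: "\<exists>x'\<in>{0..1}. \<psi> x' \<le> 2 * \<psi> x" if x: "x \<in> {0..1}" for x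
  proof (cases "x \<le> 1/2")
    case True
    then show ?thesis
      using mid[of 0 "2 * x"] x ends by (intro bexI[of _ "2 * x"]) auto
  next
    case False
    then show ?thesis
      using mid[of 1 "2 * x - 1"] x ends by (intro bexI[of _ "2 * x - 1"]) auto
  qed
  have iterate: "\<exists>x\<in>{0..1}. \<psi> x \<le> 2 ^ k * \<psi> t" for k :: nat
  proof (induction k)
    case 0
    show ?case using t by auto
  next
    case (Suc k)
    then obtain x where x: "x \<in> {0..1}" "\<psi> x \<le> 2 ^ k * \<psi> t" by blast
    then obtain x' where "x' \<in> {0..1}" "\<psi> x' \<le> 2 * \<psi> x" using double by blast
    then show ?case using x(2) by (intro bexI[of _ x']) auto
  qed
  obtain k :: nat where "L / \<psi> t < 2 ^ k"
    using real_arch_pow[of 2 "L / \<psi> t"] by auto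
  then have "2 ^ k * \<psi> t < L"
    using neg by (simp add: divide_less_eq)
  moreover obtain x where "x \<in> {0..1}" "\<psi> x \<le> 2 ^ k * \<psi> t"
    using iterate by blast
  ultimately show False
    using below by fastforce
qed

(* Midpoint concavity of Bf on the region ok, in the variables (Y, K) jointly; this is
   hypothesis (ii) of the theorem in the case d = 0. *)
definition midpoint_concave_on :: "('a::real_vector \<Rightarrow> real \<Rightarrow> bool) \<Rightarrow> ('a \<Rightarrow> real \<Rightarrow> real) \<Rightarrow> bool" where
  "midpoint_concave_on ok Bf \<longleftrightarrow> (\<forall>Y1 K1 Y2 K2. ok Y1 K1 \<longrightarrow> ok Y2 K2 \<longrightarrow>
      ok ((1/2) *\<^sub>R (Y1 + Y2)) ((K1 + K2) / 2) \<longrightarrow>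
      (Bf Y1 K1 + Bf Y2 K2) / 2 \<le> Bf ((1/2) *\<^sub>R (Y1 + Y2)) ((K1 + K2) / 2))"

lemma midpoint_concave_onD:
  "midpoint_concave_on ok Bf \<Longrightarrow> ok Y1 K1 \<Longrightarrow> ok Y2 K2 \<Longrightarrow> ok ((1/2) *\<^sub>R (Y1 + Y2)) ((K1 + K2) / 2) \<Longrightarrow>
    (Bf Y1 K1 + Bf Y2 K2) / 2 \<le> Bf ((1/2) *\<^sub>R (Y1 + Y2)) ((K1 + K2) / 2)"
  unfolding midpoint_concave_on_def by blast

lemma segment_jensen:
  fixes Bf :: "'a::real_vector \<Rightarrow> real \<Rightarrow> real" and ok :: "'a \<Rightarrow> real \<Rightarrow> bool"
  assumes conc: "midpoint_concave_on ok Bf"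
    and nonneg: "\<And>Y K. ok Y K \<Longrightarrow> 0 \<le> Bf Y K"
    and seg: "\<And>x. x \<in> {0..1} \<Longrightarrow> ok (x *\<^sub>R P1 + (1 - x) *\<^sub>R P2) (x * K1 + (1 - x) * K2)"
    and t: "t \<in> {0..1}"
  shows "t * Bf P1 K1 + (1 - t) * Bf P2 K2 \<le> Bf (t *\<^sub>R P1 + (1 - t) *\<^sub>R P2) (t * K1 + (1 - t) * K2)"
proof -
  define \<phi> where "\<phi> x = Bf (x *\<^sub>R P1 + (1 - x) *\<^sub>R P2) (x * K1 + (1 - x) * K2)" for x
  define \<psi> where "\<psi> x = \<phi> x - (x * \<phi> 1 + (1 - x) * \<phi> 0)" for x
  have \<phi>_mid: "(\<phi> x + \<phi> y) / 2 \<le> \<phi> ((x + y) / 2)" if "x \<in> {0..1}" "y \<in> {0..1}" for x y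
  proof -
    define Q where "Q s = s *\<^sub>R P1 + (1 - s) *\<^sub>R P2" for s
    define L where "L s = s * K1 + (1 - s) * K2" for s
    have "Q ((x + y) / 2) = (1/2) *\<^sub>R (Q x + Q y)"
      unfolding Q_def by (simp add: algebra_simps flip: scaleR_add_left)
    moreover have "L ((x + y) / 2) = (L x + L y) / 2"
      unfolding L_def by (simp add: algebra_simps add_divide_distrib diff_divide_distrib)
    moreover have "(x + y) / 2 \<in> {0..1}"
      using that by auto
    ultimately show ?thesis
      using midpoint_concave_onD[OF conc] seg that unfolding \<phi>_def Q_def[symmetric] L_def[symmetric]
      by metis
  qed
  have "0 \<le> \<psi> t"
  proof (rule midpoint_concave_nonneg[where \<psi> = \<psi> and t = t and L = "- (\<phi> 0 + \<phi> 1)"])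
    fix x y :: real assume "x \<in> {0..1}" "y \<in> {0..1}"
    from \<phi>_mid[OF this] show "(\<psi> x + \<psi> y) / 2 \<le> \<psi> ((x + y) / 2)"
      unfolding \<psi>_def by argo
  next
    fix x :: real assume x: "x \<in> {0..1}"
    have \<phi>_nonneg: "0 \<le> \<phi> y" if "y \<in> {0..1}" for y
      unfolding \<phi>_def using nonneg[OF seg[OF that]] .
    have "0 \<le> \<phi> x" "0 \<le> \<phi> 0" "0 \<le> \<phi> 1"
      using x by (simp_all add: \<phi>_nonneg)
    moreover have "x * \<phi> 1 \<le> \<phi> 1" "(1 - x) * \<phi> 0 \<le> \<phi> 0"
      using x \<open>0 \<le> \<phi> 0\<close> \<open>0 \<le> \<phi> 1\<close> by (simp_all add: mult_left_le_one_le)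
    ultimately show "- (\<phi> 0 + \<phi> 1) \<le> \<psi> x"
      unfolding \<psi>_def by linarith
  qed (use t in \<open>simp_all add: \<psi>_def\<close>)
  then show ?thesis
    unfolding \<psi>_def \<phi>_def by simp
qed

definition wavg :: "'i set \<Rightarrow> ('i \<Rightarrow> real) \<Rightarrow> ('i \<Rightarrow> 'a::real_vector) \<Rightarrow> 'a" where
  "wavg S D Y = (1 / sum D S) *\<^sub>R (\<Sum>i\<in>S. D i *\<^sub>R Y i)"

lemma wavg_real: "wavg S D y = (\<Sum>i\<in>S. D i * y i) / sum D S"
  for y :: "'i \<Rightarrow> real"
  by (simp add: wavg_def)

lemma wavg_linear: "linear f \<Longrightarrow> f (wavg S D Y) = wavg S D (\<lambda>i. f (Y i))"
  by (simp add: wavg_def linear_scale linear_sum)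

lemma wavg_singleton: "D i \<noteq> 0 \<Longrightarrow> wavg {i} D Y = Y i"
  by (simp add: wavg_def)

lemma wavg_union:
  assumes "finite S" "finite T" "S \<inter> T = {}" "sum D S \<noteq> 0" "sum D T \<noteq> 0"
  shows "wavg (S \<union> T) D Y
    = (sum D S / sum D (S \<union> T)) *\<^sub>R wavg S D Y + (sum D T / sum D (S \<union> T)) *\<^sub>R wavg T D Y"
  using assms(4,5) by (simp add: wavg_def sum.union_disjoint[OF assms(1-3)] scaleR_add_right)

lemma wavg_in_convex:
  assumes "finite S" "convex C" "0 < sum D S"
    and "\<And>i. i \<in> S \<Longrightarrow> 0 \<le> D i" "\<And>i. i \<in> S \<Longrightarrow> Y i \<in> C"
  shows "wavg S D Y \<in> C"
proof -
  have "wavg S D Y = (\<Sum>i\<in>S. (D i / sum D S) *\<^sub>R Y i)"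
    by (simp add: wavg_def scaleR_sum_right)
  moreover have "(\<Sum>i\<in>S. D i / sum D S) = 1"
    using assms(3) by (simp flip: sum_divide_distrib)
  ultimately show ?thesis
    using convex_sum[OF assms(1,2), of "\<lambda>i. D i / sum D S" Y] assms(3-5) by simp
qed

lemma wavg_le_twice_mean:
  fixes y :: "'i \<Rightarrow> real"
  assumes "finite S" "S \<noteq> {}" "\<And>i. i \<in> S \<Longrightarrow> 0 \<le> y i"
    and "\<And>i. i \<in> S \<Longrightarrow> 2/3 \<le> D i \<and> D i \<le> 4/3"
  shows "wavg S D y \<le> 2 * wavg S (\<lambda>_. 1) y"
proof -
  have "(\<Sum>i\<in>S. D i * y i) \<le> 4/3 * sum y S"
    unfolding sum_distrib_left using assms(3,4) by (intro sum_mono mult_right_mono) auto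
  moreover have "2/3 * card S \<le> sum D S"
    using sum_mono[of S "\<lambda>_. 2/3" D] assms(4) by simp
  moreover have "0 < card S"
    using assms(1,2) card_gt_0_iff by blast
  moreover have "0 \<le> sum y S"
    using assms(3) by (simp add: sum_nonneg)
  ultimately have "(\<Sum>i\<in>S. D i * y i) / sum D S \<le> (4/3 * sum y S) / (2/3 * card S)"
    by (intro frac_le) auto
  then show ?thesis
    by (simp add: wavg_real)
qed

lemma wavg_balanced_pair:
  fixes Y :: "'i \<Rightarrow> 'a::real_vector"
  assumes "finite S" "sum w S = 0"
  shows "wavg S (\<lambda>i. 1 + w i) Y + wavg S (\<lambda>i. 1 - w i) Y = 2 *\<^sub>R wavg S (\<lambda>_. 1) Y"
    and "wavg S (\<lambda>i. 1 + w i) Y - wavg S (\<lambda>i. 1 - w i) Y = (2 / card S) *\<^sub>R (\<Sum>i\<in>S. w i *\<^sub>R Y i)"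
proof -
  have W: "sum (\<lambda>i. 1 + w i) S = card S" "sum (\<lambda>i. 1 - w i) S = card S" "sum (\<lambda>_. 1) S = card S"
    using assms by (simp_all add: sum.distrib sum_subtractf)
  show "wavg S (\<lambda>i. 1 + w i) Y + wavg S (\<lambda>i. 1 - w i) Y = 2 *\<^sub>R wavg S (\<lambda>_. 1) Y"
    unfolding wavg_def W
    by (simp add: scaleR_add_left scaleR_diff_left sum.distrib sum_subtractf flip: scaleR_add_right)
      (simp flip: scaleR_2)
  show "wavg S (\<lambda>i. 1 + w i) Y - wavg S (\<lambda>i. 1 - w i) Y = (2 / card S) *\<^sub>R (\<Sum>i\<in>S. w i *\<^sub>R Y i)"
    unfolding wavg_def W
    by (simp add: scaleR_add_left scaleR_diff_left sum.distrib sum_subtractf flip: scaleR_diff_right)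
      (simp flip: scaleR_2)
qed

(* The leaves (indices at level n) below the node of height h and index j: the dyadic
   block [j 2^h, (j+1) 2^h). *)
definition blk :: "nat \<Rightarrow> nat \<Rightarrow> nat set" where
  "blk h j = {j * 2 ^ h ..< (j + 1) * 2 ^ h}"

lemma finite_blk [simp]: "finite (blk h j)"
  by (simp add: blk_def)

lemma card_blk [simp]: "card (blk h j) = 2 ^ h"
  by (simp add: blk_def algebra_simps)

lemma blk_nonempty: "blk h j \<noteq> {}"
  by (simp add: blk_def)

lemma blk_zero: "blk 0 j = {j}"
  by (auto simp: blk_def)

lemma blk_root: "blk n 0 = {..<2 ^ n}"
  by (auto simp: blk_def)

lemma blk_Suc: "blk (Suc h) j = blk h (2 * j) \<union> blk h (2 * j + 1)"
  and blk_children_disjoint: "blk h (2 * j) \<inter> blk h (2 * j + 1) = {}"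
  by (auto simp: blk_def)

lemma sum_blk_Suc: "sum f (blk (Suc h) j) = sum f (blk h (2 * j)) + sum f (blk h (2 * j + 1))"
  unfolding blk_Suc by (rule sum.union_disjoint[OF finite_blk finite_blk blk_children_disjoint])

lemma blk_subset: "h \<le> n \<Longrightarrow> j < 2 ^ (n - h) \<Longrightarrow> blk h j \<subseteq> {..<2 ^ n}"
proof -
  assume "h \<le> n" "j < 2 ^ (n - h)"
  then have "(j + 1) * 2 ^ h \<le> 2 ^ (n - h) * (2::nat) ^ h"
    by (intro mult_right_mono) auto
  also have "\<dots> = 2 ^ n"
    using \<open>h \<le> n\<close> by (simp flip: power_add)
  finally show ?thesis
    unfolding blk_def by auto
qed

lemma children_index:
  fixes h n j :: nat
  assumes "Suc h \<le> n" "j < 2 ^ (n - Suc h)"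
  shows "2 * j < 2 ^ (n - h)" "2 * j + 1 < 2 ^ (n - h)"
proof -
  have "(2::nat) ^ (n - h) = 2 * 2 ^ (n - Suc h)"
    using assms(1) by (simp flip: power_Suc add: Suc_diff_le)
  then show "2 * j < 2 ^ (n - h)" "2 * j + 1 < 2 ^ (n - h)"
    using assms(2) by simp_all
qed

lemma wavg_blk_Suc:
  assumes W1: "0 < sum D (blk h (2 * j))" and W2: "0 < sum D (blk h (2 * j + 1))"
  defines "t \<equiv> sum D (blk h (2 * j)) / sum D (blk (Suc h) j)"
  shows "t \<in> {0..1}"
    and "wavg (blk (Suc h) j) D Z = t *\<^sub>R wavg (blk h (2 * j)) D Z + (1 - t) *\<^sub>R wavg (blk h (2 * j + 1)) D Z"
    and "sum D (blk (Suc h) j) * t = sum D (blk h (2 * j))"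
    and "sum D (blk (Suc h) j) * (1 - t) = sum D (blk h (2 * j + 1))"
    and "0 < sum D (blk (Suc h) j)"
proof -
  have W: "sum D (blk (Suc h) j) = sum D (blk h (2 * j)) + sum D (blk h (2 * j + 1))"
    by (rule sum_blk_Suc)
  have t': "1 - t = sum D (blk h (2 * j + 1)) / sum D (blk (Suc h) j)"
    unfolding t_def W using W1 W2 by (simp add: field_simps)
  show "t \<in> {0..1}" "sum D (blk (Suc h) j) * t = sum D (blk h (2 * j))"
    "sum D (blk (Suc h) j) * (1 - t) = sum D (blk h (2 * j + 1))" "0 < sum D (blk (Suc h) j)"
    unfolding t' unfolding t_def W using W1 W2 by auto
  show "wavg (blk (Suc h) j) D Z = t *\<^sub>R wavg (blk h (2 * j)) D Z + (1 - t) *\<^sub>R wavg (blk h (2 * j + 1)) D Z"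
    unfolding t' unfolding t_def blk_Suc
    by (rule wavg_union[OF finite_blk finite_blk blk_children_disjoint]) (use W1 W2 in auto)
qed

lemma dyadic_jensen:
  fixes Bf :: "'a::real_vector \<Rightarrow> real \<Rightarrow> real" and ok :: "'a \<Rightarrow> real \<Rightarrow> bool"
    and D :: "nat \<Rightarrow> real" and Y :: "nat \<Rightarrow> 'a" and m :: "nat \<Rightarrow> real"
  assumes conc: "midpoint_concave_on ok Bf"
    and nonneg: "\<And>Y K. ok Y K \<Longrightarrow> 0 \<le> Bf Y K"
    and D_pos: "\<And>i. i < 2 ^ n \<Longrightarrow> 0 < D i"
    and leaf_ok: "\<And>i. i < 2 ^ n \<Longrightarrow> ok (Y i) (m i)"
    and segment_ok: "\<And>h j x. Suc h \<le> n \<Longrightarrow> j < 2 ^ (n - Suc h) \<Longrightarrow> x \<in> {0..1} \<Longrightarrow>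
        ok (x *\<^sub>R wavg (blk h (2 * j)) D Y + (1 - x) *\<^sub>R wavg (blk h (2 * j + 1)) D Y)
           (x * wavg (blk h (2 * j)) D m + (1 - x) * wavg (blk h (2 * j + 1)) D m)"
  shows "h \<le> n \<Longrightarrow> j < 2 ^ (n - h) \<Longrightarrow>
      ok (wavg (blk h j) D Y) (wavg (blk h j) D m) \<and>
      (\<Sum>i\<in>blk h j. D i * Bf (Y i) (m i))
        \<le> sum D (blk h j) * Bf (wavg (blk h j) D Y) (wavg (blk h j) D m)"
proof (induction h arbitrary: j)
  case 0
  then have "0 < D j" "ok (Y j) (m j)"
    using D_pos leaf_ok by simp_all
  then show ?case
    by (simp add: blk_zero wavg_singleton)
next
  case (Suc h)
  define S1 S2 where "S1 = blk h (2 * j)" and "S2 = blk h (2 * j + 1)"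
  define P1 P2 K1 K2 where "P1 = wavg S1 D Y" and "P2 = wavg S2 D Y"
    and "K1 = wavg S1 D m" and "K2 = wavg S2 D m"
  define W t where "W = sum D (blk (Suc h) j)" and "t = sum D S1 / W"
  have hn: "h \<le> n" and c: "2 * j < 2 ^ (n - h)" "2 * j + 1 < 2 ^ (n - h)"
    using Suc.prems children_index by auto
  have "0 < sum D (blk h k)" if "k < 2 ^ (n - h)" for k
    using blk_subset[OF hn that] D_pos by (intro sum_pos) (auto simp: blk_nonempty)
  note parent = wavg_blk_Suc[OF this[OF c(1)] this[OF c(2)], folded S1_def S2_def W_def t_def]
  have segment: "\<And>x. x \<in> {0..1} \<Longrightarrow> ok (x *\<^sub>R P1 + (1 - x) *\<^sub>R P2) (x * K1 + (1 - x) * K2)"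
    unfolding P1_def P2_def K1_def K2_def S1_def S2_def using segment_ok Suc.prems by blast
  have "(\<Sum>i\<in>blk (Suc h) j. D i * Bf (Y i) (m i)) \<le> sum D S1 * Bf P1 K1 + sum D S2 * Bf P2 K2"
    unfolding sum_blk_Suc S1_def S2_def P1_def P2_def K1_def K2_def
    using Suc.IH[OF hn c(1)] Suc.IH[OF hn c(2)] by (intro add_mono) auto
  also have "\<dots> = W * (t * Bf P1 K1 + (1 - t) * Bf P2 K2)"
    by (simp add: distrib_left parent(3,4) flip: mult.assoc)
  also have "\<dots> \<le> W * Bf (t *\<^sub>R P1 + (1 - t) *\<^sub>R P2) (t * K1 + (1 - t) * K2)"
    using segment_jensen[where ok = ok and Bf = Bf, OF conc _ segment parent(1)] nonneg parent(5)
    by (intro mult_left_mono) auto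
  finally show ?case
    using segment[OF parent(1)] parent(2)[of Y] parent(2)[of m]
    unfolding P1_def P2_def K1_def K2_def W_def by simp
qed

(* Weights of size at most 1/3 and mean zero that pick up a sixth of the absolute
   deviation of g from its mean c: take sgn (g - c) / 6 and recentre it. *)
lemma sign_weights:
  fixes g :: "'i \<Rightarrow> real" and c :: real
  assumes "finite S" and mean: "sum g S = card S * c"
  obtains w where "\<And>i. \<bar>w i\<bar> \<le> 1/3" "sum w S = 0"
    "(\<Sum>i\<in>S. w i * g i) = (\<Sum>i\<in>S. \<bar>g i - c\<bar>) / 6"
proof (cases "S = {}")
  case True
  then show ?thesis by (intro that[of "\<lambda>_. 0"]) auto
next
  case False
  define \<sigma> where "\<sigma> i = sgn (g i - c) / 6" for i
  define s where "s = sum \<sigma> S / card S"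
  have N: "0 < card S"
    using assms(1) False card_gt_0_iff by blast
  have \<sigma>_bound: "\<bar>\<sigma> i\<bar> \<le> 1/6" for i
    unfolding \<sigma>_def by (simp add: sgn_real_def)
  have "\<bar>sum \<sigma> S\<bar> \<le> (\<Sum>i\<in>S. \<bar>\<sigma> i\<bar>)"
    by (rule sum_abs)
  also have "\<dots> \<le> card S / 6"
    using sum_mono[of S "\<lambda>i. \<bar>\<sigma> i\<bar>" "\<lambda>_. 1/6"] \<sigma>_bound by simp
  finally have s_bound: "\<bar>s\<bar> \<le> 1/6"
    unfolding s_def using N by (simp add: abs_divide divide_le_eq)
  have centred: "(\<Sum>i\<in>S. g i - c) = 0"
    using mean by (simp add: sum_subtractf)
  show ?thesis
  proof (rule that[of "\<lambda>i. \<sigma> i - s"])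
    show "\<bar>\<sigma> i - s\<bar> \<le> 1/3" for i
      using \<sigma>_bound[of i] s_bound by linarith
    show w_sum: "(\<Sum>i\<in>S. \<sigma> i - s) = 0"
      unfolding s_def using N by (simp add: sum_subtractf)
    have "(\<Sum>i\<in>S. (\<sigma> i - s) * (g i - c)) = (\<Sum>i\<in>S. (\<sigma> i - s) * g i - c * (\<sigma> i - s))"
      by (simp add: algebra_simps)
    also have "\<dots> = (\<Sum>i\<in>S. (\<sigma> i - s) * g i) - c * (\<Sum>i\<in>S. \<sigma> i - s)"
      by (simp add: sum_subtractf sum_distrib_left right_diff_distrib)
    finally have "(\<Sum>i\<in>S. (\<sigma> i - s) * g i) = (\<Sum>i\<in>S. (\<sigma> i - s) * (g i - c))"
      using w_sum by simp
    also have "\<dots> = (\<Sum>i\<in>S. \<sigma> i * (g i - c)) - s * (\<Sum>i\<in>S. g i - c)"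
      by (simp add: sum_subtractf sum_distrib_left left_diff_distrib right_diff_distrib)
    also have "\<dots> = (\<Sum>i\<in>S. \<bar>g i - c\<bar>) / 6"
      unfolding centred \<sigma>_def by (simp add: sum_divide_distrib) (intro sum.cong, auto simp: sgn_real_def)
    finally show "(\<Sum>i\<in>S. (\<sigma> i - s) * g i) = (\<Sum>i\<in>S. \<bar>g i - c\<bar>) / 6" .
  qed
qed

(* Level n holds the
   leaves; the node at level n - h with index j sits above the block blk h j. *)
locale dyadic_tree =
  fixes n :: nat and A :: real and X :: "nat \<Rightarrow> nat \<Rightarrow> pt" and M :: "nat \<Rightarrow> nat \<Rightarrow> real"
  assumes XM_in: "\<And>k j. k \<le> n \<Longrightarrow> j < 2 ^ k \<Longrightarrow> inE A (X k j) (M k j)"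
    and X_mid: "\<And>k j. k < n \<Longrightarrow> j < 2 ^ k \<Longrightarrow>
        X k j = (1/2) *\<^sub>R (X (Suc k) (2 * j) + X (Suc k) (2 * j + 1))"
begin

lemma node_mean: "h \<le> n \<Longrightarrow> j < 2 ^ (n - h) \<Longrightarrow> X (n - h) j = wavg (blk h j) (\<lambda>_. 1) (X n)"
proof (induction h arbitrary: j)
  case 0
  then show ?case by (simp add: blk_zero wavg_singleton)
next
  case (Suc h)
  have hn: "h \<le> n" and c: "2 * j < 2 ^ (n - h)" "2 * j + 1 < 2 ^ (n - h)"
    using Suc.prems children_index by auto
  have level: "Suc (n - Suc h) = n - h"
    using Suc.prems(1) by simp
  have "X (n - Suc h) j = (1/2) *\<^sub>R (X (n - h) (2 * j) + X (n - h) (2 * j + 1))"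
    using X_mid[of "n - Suc h" j] Suc.prems unfolding level by simp
  also have "\<dots> = (1/2) *\<^sub>R (wavg (blk h (2 * j)) (\<lambda>_. 1) (X n) + wavg (blk h (2 * j + 1)) (\<lambda>_. 1) (X n))"
    using Suc.IH[OF hn c(1)] Suc.IH[OF hn c(2)] by simp
  also have "\<dots> = wavg (blk (Suc h) j) (\<lambda>_. 1) (X n)"
    unfolding blk_Suc
    using wavg_union[OF finite_blk finite_blk blk_children_disjoint, of "\<lambda>_. 1" h j "X n"]
      card_Un_disjoint[OF finite_blk finite_blk blk_children_disjoint, of h j]
    by (simp add: scaleR_add_right)
  finally show ?case .
qed

lemma root_mean: "linear (f :: pt \<Rightarrow> real) \<Longrightarrow> (\<Sum>i<2 ^ n. f (X n i)) = 2 ^ n * f (X 0 0)"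
  using node_mean[of n 0] by (simp add: wavg_linear wavg_real blk_root)

lemma leaf_bounds: "i < 2 ^ n \<Longrightarrow> X n i \<in> Dom \<and> M n i \<in> {0..1} \<and> 0 < cu (X n i) \<and> 0 < cv (X n i)"
  using XM_in[of n i] by (auto simp: inE_iff Dom_def)

lemma weighted_node:
  assumes D_range: "\<And>i. i < 2 ^ n \<Longrightarrow> 2/3 \<le> D i \<and> D i \<le> 4/3" and hj: "h \<le> n" "j < 2 ^ (n - h)"
  shows "wavg (blk h j) D (X n) \<in> Dom" "wavg (blk h j) D (M n) \<in> {0..1}"
    and "cu (wavg (blk h j) D (X n)) \<le> 2 * cu (X (n - h) j)"
    and "cv (wavg (blk h j) D (X n)) \<le> 2 * cv (X (n - h) j)"
proof -
  have leaf: "X n i \<in> Dom" "M n i \<in> {0..1}" "0 < cu (X n i)" "0 < cv (X n i)"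
    "2/3 \<le> D i" "D i \<le> 4/3" "0 \<le> D i" if "i \<in> blk h j" for i
    using blk_subset[OF hj] that leaf_bounds D_range[of i] by auto
  have W: "0 < sum D (blk h j)"
    using leaf(5) by (intro sum_pos) (auto simp: blk_nonempty intro: less_le_trans[of 0 "2/3"])
  show "wavg (blk h j) D (X n) \<in> Dom"
    using leaf W by (intro wavg_in_convex convex_Dom) auto
  show "wavg (blk h j) D (M n) \<in> {0..1}"
    using leaf W by (intro wavg_in_convex convex_real_interval) auto
  show "cu (wavg (blk h j) D (X n)) \<le> 2 * cu (X (n - h) j)"
    using wavg_le_twice_mean[of "blk h j" "\<lambda>i. cu (X n i)" D] leaf node_mean[OF hj]
    by (simp add: wavg_linear[OF linear_coords(5)] blk_nonempty less_imp_le)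
  show "cv (wavg (blk h j) D (X n)) \<le> 2 * cv (X (n - h) j)"
    using wavg_le_twice_mean[of "blk h j" "\<lambda>i. cv (X n i)" D] leaf node_mean[OF hj]
    by (simp add: wavg_linear[OF linear_coords(6)] blk_nonempty less_imp_le)
qed

(* E_A is nonempty only for A >= 1, so E_A is contained in E_{9A/2}. *)
lemma A_ge_one: "1 \<le> A"
proof -
  have "inE A (X 0 0) (M 0 0)"
    by (rule XM_in) auto
  then show ?thesis
    unfolding inE_def by auto
qed

(* Hence the segment between the reweighted averages of two siblings stays in E_{9A/2}:
   its end points have uv <= 4A and its midpoint lies below four times the parent. *)
lemma node_segment_inE:
  assumes D_range: "\<And>i. i < 2 ^ n \<Longrightarrow> 2/3 \<le> D i \<and> D i \<le> 4/3"
    and hj: "Suc h \<le> n" "j < 2 ^ (n - Suc h)" and x: "x \<in> {0..1}"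
  shows "inE (9/2 * A)
     (x *\<^sub>R wavg (blk h (2 * j)) D (X n) + (1 - x) *\<^sub>R wavg (blk h (2 * j + 1)) D (X n))
     (x * wavg (blk h (2 * j)) D (M n) + (1 - x) * wavg (blk h (2 * j + 1)) D (M n))"
proof -
  define P1 P2 Z1 Z2 Z where "P1 = wavg (blk h (2 * j)) D (X n)" and "P2 = wavg (blk h (2 * j + 1)) D (X n)"
    and "Z1 = X (n - h) (2 * j)" and "Z2 = X (n - h) (2 * j + 1)" and "Z = X (n - Suc h) j"
  have hn: "h \<le> n" and c: "2 * j < 2 ^ (n - h)" "2 * j + 1 < 2 ^ (n - h)"
    using hj children_index by auto
  note child1 = weighted_node[where D = D, OF D_range hn c(1), folded P1_def Z1_def]
  note child2 = weighted_node[where D = D, OF D_range hn c(2), folded P2_def Z2_def]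
  have Z: "Z = (1/2) *\<^sub>R (Z1 + Z2)"
    using X_mid[of "n - Suc h" j] hj unfolding Z_def Z1_def Z2_def by (simp add: Suc_diff_Suc)
  have pos: "0 < cu P1" "0 < cv P1" "0 < cu P2" "0 < cv P2"
    using child1(1) child2(1) by (auto simp: Dom_def)
  have Z_in: "cu Z1 * cv Z1 \<le> A" "cu Z2 * cv Z2 \<le> A" "cu Z * cv Z \<le> A"
    using XM_in[of "n - h" "2 * j"] XM_in[of "n - h" "2 * j + 1"] XM_in[of "n - Suc h" j] hj c
    unfolding Z_def Z1_def Z2_def inE_def by auto
  have "cu P1 * cv P1 \<le> (2 * cu Z1) * (2 * cv Z1)" "cu P2 * cv P2 \<le> (2 * cu Z2) * (2 * cv Z2)"
    using child1(3,4) child2(3,4) pos by (intro mult_mono; simp)+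
  then have prod: "cu P1 * cv P1 \<le> 4 * A" "cu P2 * cv P2 \<le> 4 * A"
    using Z_in by linarith+
  have "(cu P1 + cu P2) * (cv P1 + cv P2) \<le> (4 * cu Z) * (4 * cv Z)"
    using child1(3,4) child2(3,4) pos unfolding Z
    by (intro mult_mono) (simp_all add: coord_add coord_scale)
  then have sum_prod: "(cu P1 + cu P2) * (cv P1 + cv P2) \<le> 4 * (4 * A)"
    using Z_in by linarith
  have "9/2 * A = 9/8 * (4 * A)"
    by simp
  then show ?thesis
    using segment_inE[OF child1(1) child2(1) _ _ _ _ prod sum_prod] child1(2) child2(2) x
    unfolding P1_def P2_def by auto
qed

lemma root_jensen:
  fixes Bf :: "pt \<Rightarrow> real \<Rightarrow> real"
  assumes conc: "midpoint_concave_on (inE (9/2 * A)) Bf"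
    and nonneg: "\<And>Y K. inE (9/2 * A) Y K \<Longrightarrow> 0 \<le> Bf Y K"
    and D_range: "\<And>i. i < 2 ^ n \<Longrightarrow> 2/3 \<le> D i \<and> D i \<le> 4/3"
  shows "inE (9/2 * A) (wavg {..<2 ^ n} D (X n)) (wavg {..<2 ^ n} D (M n))"
    and "(\<Sum>i<2 ^ n. D i * Bf (X n i) (M n i))
           \<le> sum D {..<2 ^ n} * Bf (wavg {..<2 ^ n} D (X n)) (wavg {..<2 ^ n} D (M n))"
proof -
  have D_pos: "0 < D i" if "i < 2 ^ n" for i
    using D_range[OF that] by linarith
  have leaf_ok: "inE (9/2 * A) (X n i) (M n i)" if "i < 2 ^ n" for i
    by (rule inE_mono[OF _ XM_in[OF _ that]]) (use A_ge_one in auto)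
  have segment_ok: "\<And>h j x. Suc h \<le> n \<Longrightarrow> j < 2 ^ (n - Suc h) \<Longrightarrow> x \<in> {0..1} \<Longrightarrow>
      inE (9/2 * A) (x *\<^sub>R wavg (blk h (2 * j)) D (X n) + (1 - x) *\<^sub>R wavg (blk h (2 * j + 1)) D (X n))
        (x * wavg (blk h (2 * j)) D (M n) + (1 - x) * wavg (blk h (2 * j + 1)) D (M n))"
    by (rule node_segment_inE[where D = D, OF D_range])
  have "inE (9/2 * A) (wavg (blk n 0) D (X n)) (wavg (blk n 0) D (M n)) \<and>
      (\<Sum>i\<in>blk n 0. D i * Bf (X n i) (M n i)) \<le> sum D (blk n 0) * Bf (wavg (blk n 0) D (X n)) (wavg (blk n 0) D (M n))"
    using dyadic_jensen[OF conc nonneg D_pos leaf_ok segment_ok, where h = n and j = 0] by simp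
  then show "inE (9/2 * A) (wavg {..<2 ^ n} D (X n)) (wavg {..<2 ^ n} D (M n))"
    and "(\<Sum>i<2 ^ n. D i * Bf (X n i) (M n i))
           \<le> sum D {..<2 ^ n} * Bf (wavg {..<2 ^ n} D (X n)) (wavg {..<2 ^ n} D (M n))"
    unfolding blk_root by auto
qed

lemma balanced_split:
  fixes Bf :: "pt \<Rightarrow> real \<Rightarrow> real" and w :: "nat \<Rightarrow> real"
  assumes conc: "midpoint_concave_on (inE (9/2 * A)) Bf"
    and nonneg: "\<And>Y K. inE (9/2 * A) Y K \<Longrightarrow> 0 \<le> Bf Y K"
    and w_bound: "\<And>i. \<bar>w i\<bar> \<le> 1/3" and w_sum: "sum w {..<2 ^ n} = 0"
  defines "Pp \<equiv> wavg {..<2 ^ n} (\<lambda>i. 1 + w i) (X n)" and "Pm \<equiv> wavg {..<2 ^ n} (\<lambda>i. 1 - w i) (X n)"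
    and "Kp \<equiv> wavg {..<2 ^ n} (\<lambda>i. 1 + w i) (M n)" and "Km \<equiv> wavg {..<2 ^ n} (\<lambda>i. 1 - w i) (M n)"
  shows "inE (9/2 * A) Pp Kp" "inE (9/2 * A) Pm Km"
    and "X 0 0 = (1/2) *\<^sub>R (Pp + Pm)"
    and "(Kp + Km) / 2 = (1 / 2 ^ n) * (\<Sum>i<2 ^ n. M n i)"
    and "(1 / 2 ^ n) * (\<Sum>i<2 ^ n. Bf (X n i) (M n i)) \<le> (Bf Pp Kp + Bf Pm Km) / 2"
    and "cg Pp - cg Pm = (2 / 2 ^ n) * (\<Sum>i<2 ^ n. w i * cg (X n i))"
proof -
  have weights: "2/3 \<le> 1 + w i \<and> 1 + w i \<le> 4/3" "2/3 \<le> 1 - w i \<and> 1 - w i \<le> 4/3"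
    if "i < 2 ^ n" for i
    using w_bound[of i] unfolding abs_le_iff by auto
  have weight_sums: "sum (\<lambda>i. 1 + w i) {..<2 ^ n} = 2 ^ n" "sum (\<lambda>i. 1 - w i) {..<2 ^ n} = 2 ^ n"
    using w_sum by (simp_all add: sum.distrib sum_subtractf)
  have jensen_p: "inE (9/2 * A) Pp Kp" "(\<Sum>i<2 ^ n. (1 + w i) * Bf (X n i) (M n i)) \<le> 2 ^ n * Bf Pp Kp"
    using root_jensen[of Bf "\<lambda>i. 1 + w i", OF conc nonneg weights(1)] weight_sums
    unfolding Pp_def Kp_def by simp_all
  have jensen_m: "inE (9/2 * A) Pm Km" "(\<Sum>i<2 ^ n. (1 - w i) * Bf (X n i) (M n i)) \<le> 2 ^ n * Bf Pm Km"
    using root_jensen[of Bf "\<lambda>i. 1 - w i", OF conc nonneg weights(2)] weight_sums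
    unfolding Pm_def Km_def by simp_all
  show "inE (9/2 * A) Pp Kp" "inE (9/2 * A) Pm Km"
    using jensen_p(1) jensen_m(1) .
  show "X 0 0 = (1/2) *\<^sub>R (Pp + Pm)"
    using node_mean[of n 0] wavg_balanced_pair(1)[OF _ w_sum, of "X n"]
    unfolding Pp_def Pm_def blk_root by simp
  show "(Kp + Km) / 2 = (1 / 2 ^ n) * (\<Sum>i<2 ^ n. M n i)"
    using wavg_balanced_pair(1)[OF _ w_sum, of "M n"]
    unfolding Kp_def Km_def by (simp add: wavg_real)
  have "(\<Sum>i<2 ^ n. (1 + w i) * Bf (X n i) (M n i)) + (\<Sum>i<2 ^ n. (1 - w i) * Bf (X n i) (M n i))
      = 2 * (\<Sum>i<2 ^ n. Bf (X n i) (M n i))"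
    by (simp add: algebra_simps sum.distrib sum_subtractf flip: sum_distrib_left)
  then show "(1 / 2 ^ n) * (\<Sum>i<2 ^ n. Bf (X n i) (M n i)) \<le> (Bf Pp Kp + Bf Pm Km) / 2"
    using jensen_p(2) jensen_m(2) by (simp add: field_simps)
  show "cg Pp - cg Pm = (2 / 2 ^ n) * (\<Sum>i<2 ^ n. w i * cg (X n i))"
    using arg_cong[OF wavg_balanced_pair(2)[OF _ w_sum, of "X n"], of cg]
    unfolding Pp_def Pm_def by (simp add: coord_add coord_scale linear_diff[OF linear_coords(2)] linear_sum[OF linear_coords(2)])
qed

lemma oscillating_split:
  fixes Bf :: "pt \<Rightarrow> real \<Rightarrow> real"
  assumes conc: "midpoint_concave_on (inE (9/2 * A)) Bf"
    and nonneg: "\<And>Y K. inE (9/2 * A) Y K \<Longrightarrow> 0 \<le> Bf Y K"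
  obtains Pp Kp Pm Km where "inE (9/2 * A) Pp Kp" "inE (9/2 * A) Pm Km"
    and "X 0 0 = (1/2) *\<^sub>R (Pp + Pm)"
    and "(Kp + Km) / 2 = (1 / 2 ^ n) * (\<Sum>i<2 ^ n. M n i)"
    and "(1 / 2 ^ n) * (\<Sum>i<2 ^ n. Bf (X n i) (M n i)) \<le> (Bf Pp Kp + Bf Pm Km) / 2"
    and "\<bar>cg Pp - cg Pm\<bar> = (1 / 2 ^ n) * (\<Sum>i<2 ^ n. \<bar>cg (X n i) - cg (X 0 0)\<bar>) / 3"
proof -
  obtain w where w: "\<And>i. \<bar>w i\<bar> \<le> 1/3" "sum w {..<2 ^ n} = 0"
    "(\<Sum>i<2 ^ n. w i * cg (X n i)) = (\<Sum>i<2 ^ n. \<bar>cg (X n i) - cg (X 0 0)\<bar>) / 6"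
    using sign_weights[of "{..<2 ^ n}" "\<lambda>i. cg (X n i)" "cg (X 0 0)"] root_mean[OF linear_coords(2)]
    by auto
  note split = balanced_split[of Bf w, OF conc nonneg w(1,2)]
  have "0 \<le> (\<Sum>i<2 ^ n. \<bar>cg (X n i) - cg (X 0 0)\<bar>)"
    by (simp add: sum_nonneg)
  then show ?thesis
    using split(6) w(3) by (intro that[OF split(1-5)]) simp_all
qed

end

(* The paper's Lemma 8.3.  With w the sign weights of the leaves' g-coordinates, the
   gain inequality (ii) applied at the root to the balanced split gives the bound with
   the constant 3; the statement's 36 is weaker. *)
theorem lemma8p3:
  fixes C A :: real and n :: nat
    and B :: "real \<Rightarrow> pt \<Rightarrow> real \<Rightarrow> real"
    and X :: "nat \<Rightarrow> nat \<Rightarrow> pt" and M :: "nat \<Rightarrow> nat \<Rightarrow> real"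
  assumes C_pos: "C > 0"
    and B_bound: "\<And>a Y K. a > 1 \<Longrightarrow> inE a Y K \<Longrightarrow>
        0 \<le> B a Y K \<and> B a Y K \<le> C * a * sqrt (cF Y) * sqrt (cG Y)"
    and B_conc: "\<And>a Y K Y1 K1 Y2 K2. a > 1 \<Longrightarrow> inE a Y K \<Longrightarrow> inE a Y1 K1 \<Longrightarrow> inE a Y2 K2 \<Longrightarrow>
        Y = (1/2) *\<^sub>R (Y1 + Y2) \<Longrightarrow> K - (K1 + K2) / 2 \<ge> 0 \<Longrightarrow>
        B a Y K - (B a Y1 K1 + B a Y2 K2) / 2 \<ge> (K - (K1 + K2) / 2) * \<bar>cf Y\<bar> * \<bar>cg Y1 - cg Y2\<bar>"
    and A_gt: "A > 1"
    and n_ge: "n \<ge> 1"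
    and XM_in: "\<And>k j. k \<le> n \<Longrightarrow> j < 2 ^ k \<Longrightarrow> inE A (X k j) (M k j)"
    and X_mid: "\<And>k j. k < n \<Longrightarrow> j < 2 ^ k \<Longrightarrow>
        X k j = (1/2) *\<^sub>R (X (Suc k) (2 * j) + X (Suc k) (2 * j + 1))"
    and M_mid: "\<And>k j. 0 < k \<Longrightarrow> k < n \<Longrightarrow> j < 2 ^ k \<Longrightarrow>
        M k j = (M (Suc k) (2 * j) + M (Suc k) (2 * j + 1)) / 2"
    and d_nonneg: "M 0 0 - (1 / 2 ^ n) * (\<Sum>j<2 ^ n. M n j) \<ge> 0"
  shows "(M 0 0 - (1 / 2 ^ n) * (\<Sum>j<2 ^ n. M n j)) * \<bar>cf (X 0 0)\<bar>
            * ((1 / 2 ^ n) * (\<Sum>j<2 ^ n. \<bar>cg (X n j) - cg (X 0 0)\<bar>))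
         \<le> 36 * (B (9/2 * A) (X 0 0) (M 0 0)
                  - (1 / 2 ^ n) * (\<Sum>j<2 ^ n. B (9/2 * A) (X n j) (M n j)))"
proof -
  interpret dyadic_tree n A X M
    using XM_in X_mid by unfold_locales
  define a where "a = 9/2 * A"
  have a_gt: "a > 1"
    using A_gt unfolding a_def by simp
  have conc: "midpoint_concave_on (inE a) (B a)"
    unfolding midpoint_concave_on_def using B_conc[OF a_gt] by fastforce
  have nonneg: "\<And>Y K. inE a Y K \<Longrightarrow> 0 \<le> B a Y K"
    using B_bound[OF a_gt] by blast
  obtain Pp Kp Pm Km where split: "inE a Pp Kp" "inE a Pm Km" "X 0 0 = (1/2) *\<^sub>R (Pp + Pm)"
    "(Kp + Km) / 2 = (1 / 2 ^ n) * (\<Sum>i<2 ^ n. M n i)"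
    "(1 / 2 ^ n) * (\<Sum>i<2 ^ n. B a (X n i) (M n i)) \<le> (B a Pp Kp + B a Pm Km) / 2"
    "\<bar>cg Pp - cg Pm\<bar> = (1 / 2 ^ n) * (\<Sum>i<2 ^ n. \<bar>cg (X n i) - cg (X 0 0)\<bar>) / 3"
    using oscillating_split[of "B a"] conc nonneg unfolding a_def by blast
  define d E where "d = M 0 0 - (1 / 2 ^ n) * (\<Sum>j<2 ^ n. M n j)"
    and "E = (1 / 2 ^ n) * (\<Sum>j<2 ^ n. \<bar>cg (X n j) - cg (X 0 0)\<bar>)"
  have root_in: "inE a (X 0 0) (M 0 0)"
    using inE_mono[OF _ XM_in[of 0 0]] A_ge_one unfolding a_def by simp
  have d: "M 0 0 - (Kp + Km) / 2 = d" "0 \<le> d"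
    using split(4) d_nonneg unfolding d_def by simp_all
  have gain: "d * \<bar>cf (X 0 0)\<bar> * \<bar>cg Pp - cg Pm\<bar> \<le> B a (X 0 0) (M 0 0) - (B a Pp Kp + B a Pm Km) / 2"
    using B_conc[OF a_gt root_in split(1-3)] d by simp
  have "d * \<bar>cf (X 0 0)\<bar> * E = 3 * (d * \<bar>cf (X 0 0)\<bar> * \<bar>cg Pp - cg Pm\<bar>)"
    using split(6) unfolding E_def by simp
  moreover have "0 \<le> d * \<bar>cf (X 0 0)\<bar> * \<bar>cg Pp - cg Pm\<bar>"
    using d(2) by simp
  ultimately have "d * \<bar>cf (X 0 0)\<bar> * E \<le> 36 * (B a (X 0 0) (M 0 0) - (1 / 2 ^ n) * (\<Sum>j<2 ^ n. B a (X n j) (M n j)))"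
    using gain split(5) by argo
  then show ?thesis
    unfolding d_def E_def a_def .
qed

end
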